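(* Let $C_*>1$. There is a constant $C>0$ depending only on $C_*$ such that the following holds. Let $\mathscr{T}$ be a $C_*$-regular triangular complex in $\mathbb{R}^3$ with chosen triangle unit normals $\bar n(\kappa)$, and let $n$ be a unit edge director on $\mathscr{T}$. Then for every edge $e=\kappa\cap\kappa'\in\mathscr{E}(\mathscr{T})$, \[ |n(e)-\bar n(\kappa)|\le C\,(\mathrm{diam}\,\kappa)\,|Dn_\kappa|. \]
   Context: A triangle is $\kappa=\mathrm{conv}(x,y,z)\subset\mathbb{R}^3$ with $x,y,z$ not collinear; its edges are $[x,y],[y,z],[x,z]$; its unit normal $\bar n(\kappa)$ is one of the two vectors $\pm\frac{(y-x)\times(z-x)}{|(y-x)\times(z-x)|}$ (fixed by a choice). A triangular complex is a finite family of triangles, any two distinct of which intersect in the empty set, a common vertex, or a whole common edge; $\mathscr{E}(\mathscr{T})$ is its set of edges. It is $C_*$-regular if $\mathcal{H}^2(\kappa)\ge C_*^{-1}(\mathrm{diam}\,\kappa)^2$ for all $\kappa$. A unit edge director is a map $n:\mathscr{E}(\mathscr{T})\to S^2$ with $n(e)\cdot\tau(e)=0$ (where $\tau(e)$ is a unit vector along $e$) and $n(e)\cdot\bar n(\kappa)\ge0$ for every triangle $\kappa$ containing $e$. On each $\kappa$, $n$ is extended to the unique affine map $\kappa\to\mathbb{R}^3$ taking the value $n(e)$ at the midpoint of each edge $e$ of $\kappa$; $Dn_\kappa\in\mathbb{R}^{3\times3}$ is its (constant) gradient, viewed as a linear map on the plane of $\kappa$ precomposed with the orthogonal projection onto that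 plane; $|\cdot|$ is a matrix norm. *)

theory Defs
  imports "HOL-Analysis.Analysis"
begin

type_synonym pt = "real^3"

definition is_tri_rep :: "pt set \<Rightarrow> pt \<Rightarrow> pt \<Rightarrow> pt \<Rightarrow> bool" where
  "is_tri_rep K x y z \<longleftrightarrow> \<not> collinear {x, y, z} \<and> K = convex hull {x, y, z}"

definition triangle :: "pt set \<Rightarrow> bool" where
  "triangle K \<longleftrightarrow> (\<exists>x y z. is_tri_rep K x y z)"

definition tri_vertices :: "pt set \<Rightarrow> pt set" where
  "tri_vertices K = {x. \<exists>y z. is_tri_rep K x y z}"

definition tri_edges :: "pt set \<Rightarrow> pt set set" where
  "tri_edges K = {convex hull {x, y} | x y. \<exists>z. is_tri_rep K x y z}"

definition tri_complex :: "pt set set \<Rightarrow> bool" where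
  "tri_complex T \<longleftrightarrow> finite T \<and> (\<forall>K\<in>T. triangle K) \<and>
     (\<forall>K\<in>T. \<forall>K'\<in>T. K \<noteq> K' \<longrightarrow>
        K \<inter> K' = {}
      \<or> (\<exists>v. v \<in> tri_vertices K \<and> v \<in> tri_vertices K' \<and> K \<inter> K' = {v})
      \<or> (\<exists>e. e \<in> tri_edges K \<and> e \<in> tri_edges K' \<and> K \<inter> K' = e))"

definition complex_edges :: "pt set set \<Rightarrow> pt set set" where
  "complex_edges T = (\<Union>K\<in>T. tri_edges K)"

definition tri_area :: "pt set \<Rightarrow> real" where
  "tri_area K = (THE a. \<exists>x y z. is_tri_rep K x y z \<and> a = norm (cross3 (y - x) (z - x)) / 2)"

definition regular_complex :: "real \<Rightarrow> pt set set \<Rightarrow> bool" where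
  "regular_complex Cs T \<longleftrightarrow> (\<forall>K\<in>T. tri_area K \<ge> (diameter K)\<^sup>2 / Cs)"

definition normal_choice :: "pt set set \<Rightarrow> (pt set \<Rightarrow> pt) \<Rightarrow> bool" where
  "normal_choice T nb \<longleftrightarrow> (\<forall>K\<in>T. \<exists>x y z. is_tri_rep K x y z \<and>
      (nb K = (1 / norm (cross3 (y - x) (z - x))) *\<^sub>R cross3 (y - x) (z - x)
     \<or> nb K = - ((1 / norm (cross3 (y - x) (z - x))) *\<^sub>R cross3 (y - x) (z - x))))"

definition unit_edge_director :: "pt set set \<Rightarrow> (pt set \<Rightarrow> pt) \<Rightarrow> (pt set \<Rightarrow> pt) \<Rightarrow> bool" where
  "unit_edge_director T nb n \<longleftrightarrow>
     (\<forall>e\<in>complex_edges T. norm (n e) = 1 \<and>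
        (\<forall>x y. x \<noteq> y \<and> e = convex hull {x, y} \<longrightarrow> n e \<bullet> ((1 / norm (y - x)) *\<^sub>R (y - x)) = 0)) \<and>
     (\<forall>K\<in>T. \<forall>e\<in>tri_edges K. n e \<bullet> nb K \<ge> 0)"

text \<open>Gradient of the affine interpolant of n on K (values n(e) at edge midpoints),
  as a linear map on the plane of K precomposed with the orthogonal projection onto it,
  represented as a 3x3 matrix.\<close>
definition tri_grad :: "(pt set \<Rightarrow> pt) \<Rightarrow> pt set \<Rightarrow> real^3^3" where
  "tri_grad n K = (THE D. \<exists>x y z. is_tri_rep K x y z \<and>
      (\<exists>c::pt. c + D *v midpoint x y = n (convex hull {x, y}) \<and>
               c + D *v midpoint y z = n (convex hull {y, z}) \<and>
               c + D *v midpoint x z = n (convex hull {x, z})) \<and>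
      (\<forall>w. w \<bullet> (y - x) = 0 \<and> w \<bullet> (z - x) = 0 \<longrightarrow> D *v w = 0))"

end

theory Submission
  imports Defs
begin

(*
  Let e = [x, y] be an edge of K and [y, z] its neighbouring edge. The affine interpolant of n
  on K changes by Dn_K (z - x) / 2 between the midpoints of the two edges, so
  |n(e) - n([y, z])| <= |Dn_K| diam K / 2.  Let w be the component of n(e) in the plane of K.
  It is orthogonal to y - x, so it is determined by its inner product with z - y, which equals
  that of n(e) - n([y, z]) because n([y, z]) is orthogonal to z - y; since the area of K is at
  least (diam K)^2 / C_*, this gives |w| <= C_* |n(e) - n([y, z])| / 2.  Finally n(e) and the
  normal of K are unit vectors with nonnegative inner product, so |n(e) - nbar(K)| <= 2 |w|.
  Hence C = C_* / 2 works.
*)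

lemma permute_triple:
  assumes "P x y z" "{a, b, c} = {x, y, z}" "a \<noteq> b" "b \<noteq> c" "a \<noteq> c"
    and swap12: "\<And>x y z. P x y z \<Longrightarrow> P y x z"
    and swap23: "\<And>x y z. P x y z \<Longrightarrow> P x z y"
  shows "P a b c"
proof -
  have "P x y z" "P x z y" "P y x z" "P y z x" "P z x y" "P z y x"
    using assms(1) swap12 swap23 by blast+
  moreover have "a \<in> {x, y, z}" "b \<in> {x, y, z}" "c \<in> {x, y, z}"
    using assms(2) by blast+
  ultimately show ?thesis
    using assms(3-5) by (elim insertE emptyE) simp_all
qed

lemma norm_matrix_vector_mult_le:
  fixes A :: "real^'n^'m"
  shows "norm (A *v x) \<le> norm A * norm x"
proof -
  have row: "(A *v x) $ i = A $ i \<bullet> x" for i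
    by (simp add: matrix_vector_mult_def inner_vec_def)
  have "norm (A *v x) = L2_set (\<lambda>i. norm ((A *v x) $ i)) UNIV"
    by (simp add: norm_vec_def)
  also have "\<dots> \<le> L2_set (\<lambda>i. norm x * norm (A $ i)) UNIV"
    by (rule L2_set_mono) (simp_all add: row, metis Cauchy_Schwarz_ineq2 mult.commute)
  also have "\<dots> = norm A * norm x"
    by (simp add: L2_set_right_distrib norm_vec_def mult.commute)
  finally show ?thesis .
qed

lemma matrix_eq_0_on_span_and_orthogonal:
  fixes A :: "real^'n^'m"
  assumes span: "\<And>b. b \<in> S \<Longrightarrow> A *v b = 0"
    and orth: "\<And>w. (\<And>b. b \<in> S \<Longrightarrow> orthogonal w b) \<Longrightarrow> A *v w = 0"
  shows "A = 0"
proof -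
  have "A *v x = 0" for x
  proof -
    obtain y w where y: "y \<in> span S" and w: "\<And>b. b \<in> span S \<Longrightarrow> orthogonal w b"
      and x: "x = y + w"
      using orthogonal_subspace_decomp_exists by blast
    have "A *v y = 0"
      using linear_eq_0_on_span[OF matrix_vector_mul_linear span y] .
    moreover have "A *v w = 0"
      using orth w span_base by blast
    ultimately show ?thesis
      by (simp add: x matrix_vector_right_distrib)
  qed
  then show ?thesis
    by (simp add: matrix_eq)
qed

lemma dual_basis_pair:
  fixes u v :: "'a::real_inner"
  assumes gram: "(u \<bullet> u) * (v \<bullet> v) - (u \<bullet> v)\<^sup>2 \<noteq> 0"
  obtains p q where "p \<bullet> u = 1" "p \<bullet> v = 0" "q \<bullet> u = 0" "q \<bullet> v = 1"
    and "\<And>w. w \<bullet> u = 0 \<Longrightarrow> w \<bullet> v = 0 \<Longrightarrow> p \<bullet> w = 0 \<and> q \<bullet> w = 0"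
proof
  define G where "G = (u \<bullet> u) * (v \<bullet> v) - (u \<bullet> v)\<^sup>2"
  define p where "p = (1 / G) *\<^sub>R ((v \<bullet> v) *\<^sub>R u - (u \<bullet> v) *\<^sub>R v)"
  define q where "q = (1 / G) *\<^sub>R ((u \<bullet> u) *\<^sub>R v - (u \<bullet> v) *\<^sub>R u)"
  have G: "G \<noteq> 0"
    using gram G_def by simp
  show "p \<bullet> u = 1" "q \<bullet> v = 1"
    using G by (simp_all add: p_def q_def G_def inner_diff_left inner_diff_right inner_commute
        power2_eq_square mult.commute)
  show "p \<bullet> v = 0" "q \<bullet> u = 0"
    by (simp_all add: p_def q_def inner_diff_left inner_diff_right inner_commute mult.commute)
  show "p \<bullet> w = 0 \<and> q \<bullet> w = 0" if "w \<bullet> u = 0" "w \<bullet> v = 0" for w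
    using that by (simp add: p_def q_def inner_diff_left inner_diff_right inner_commute)
qed

lemma gram_det_eq_norm_cross3:
  fixes u v :: "real^3"
  shows "(u \<bullet> u) * (v \<bullet> v) - (u \<bullet> v)\<^sup>2 = (norm (cross3 u v))\<^sup>2"
  using norm_cross_dot[of u v]
  by (simp add: power2_norm_eq_inner power_mult_distrib algebra_simps)

lemma cross3_diff_swap:
  fixes x y z :: "real^3"
  shows "cross3 (x - y) (z - y) = - cross3 (y - x) (z - x)"
    and "cross3 (z - x) (y - x) = - cross3 (y - x) (z - x)"
  by (simp_all add: cross3_simps)

lemma norm_mult_norm_cross3_orthogonal:
  fixes w u s :: "real^3"
  assumes "w \<bullet> u = 0" "w \<bullet> cross3 u s = 0"
  shows "norm w * norm (cross3 u s) = \<bar>w \<bullet> s\<bar> * norm u"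
proof -
  have "cross3 w (cross3 u s) = (w \<bullet> s) *\<^sub>R u - (w \<bullet> u) *\<^sub>R s"
    by (simp add: cross3_simps forall_3)
  then have "cross3 w (cross3 u s) = (w \<bullet> s) *\<^sub>R u"
    using assms(1) by simp
  then have "(norm w * norm (cross3 u s))\<^sup>2 = (\<bar>w \<bullet> s\<bar> * norm u)\<^sup>2"
    using norm_cross_dot[of w "cross3 u s"] assms(2) by (simp add: power_mult_distrib)
  then show ?thesis
    by (simp add: power2_eq_iff_nonneg)
qed

lemma norm_diff_unit_le_tangential:
  fixes v N :: "'a::real_inner"
  assumes "norm v = 1" "norm N = 1" "v \<bullet> N \<ge> 0"
  shows "norm (v - N) \<le> 2 * norm (v - (v \<bullet> N) *\<^sub>R N)"
proof -
  define a where "a = v \<bullet> N"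
  have vv: "v \<bullet> v = 1" and NN: "N \<bullet> N = 1"
    using assms(1,2) by (simp_all add: dot_square_norm)
  have "a \<le> 1"
    using Cauchy_Schwarz_ineq2[of v N] assms(1,2) by (simp add: a_def)
  then have "(1 - a) * (1 + 2 * a) \<ge> 0"
    using assms(3) by (simp add: a_def)
  moreover have "(norm (v - N))\<^sup>2 = 2 - 2 * a"
    by (simp add: power2_norm_eq_inner inner_diff_left inner_diff_right vv NN a_def inner_commute)
  moreover have "(norm (v - a *\<^sub>R N))\<^sup>2 = 1 - a\<^sup>2"
    unfolding power2_norm_eq_inner by (simp add: inner_diff_left inner_diff_right vv NN a_def
        inner_commute power2_eq_square)
  ultimately have "(norm (v - N))\<^sup>2 \<le> (2 * norm (v - a *\<^sub>R N))\<^sup>2"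
    by (simp add: power_mult_distrib algebra_simps power2_eq_square)
  then show ?thesis
    unfolding a_def by (rule power2_le_imp_le) simp
qed

lemma unit_normal_deviation_le:
  fixes v m u s N :: "real^3"
  assumes v: "norm v = 1" "v \<bullet> u = 0" and m: "m \<bullet> s = 0"
    and N: "N = k *\<^sub>R cross3 u s" "norm N = 1" "v \<bullet> N \<ge> 0"
    and d: "0 < d" "norm u \<le> d" "norm s \<le> d"
    and area: "2 * d\<^sup>2 \<le> Cs * norm (cross3 u s)"
  shows "norm (v - N) \<le> Cs * norm (v - m)"
proof -
  define w where "w = v - (v \<bullet> N) *\<^sub>R N"
  have NN: "N \<bullet> N = 1"
    using N(2) by (simp add: dot_square_norm)
  have "k \<noteq> 0"
    using N(1,2) by auto
  have N_u: "N \<bullet> u = 0" and N_s: "N \<bullet> s = 0"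
    using N(1) by (simp_all add: dot_cross_self inner_commute)
  have w_u: "w \<bullet> u = 0"
    by (simp add: w_def inner_diff_left v(2) N_u)
  have "w \<bullet> N = 0"
    by (simp add: w_def inner_diff_left NN)
  then have w_cross: "w \<bullet> cross3 u s = 0"
    using N(1) \<open>k \<noteq> 0\<close> by simp
  have "w \<bullet> s = (v - m) \<bullet> s"
    by (simp add: w_def inner_diff_left N_s m)
  then have "\<bar>w \<bullet> s\<bar> \<le> norm (v - m) * norm s"
    by (simp add: Cauchy_Schwarz_ineq2)
  also have "\<dots> \<le> norm (v - m) * d"
    using d(3) by (simp add: mult_left_mono)
  finally have w_s: "\<bar>w \<bullet> s\<bar> \<le> norm (v - m) * d" .
  have "0 < 2 * d\<^sup>2"
    using d(1) by simp
  then have "0 < Cs * norm (cross3 u s)"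
    using area by linarith
  then have "0 < Cs"
    by (simp add: zero_less_mult_iff)
  have "(2 * norm w) * d\<^sup>2 = norm w * (2 * d\<^sup>2)"
    by simp
  also have "\<dots> \<le> norm w * (Cs * norm (cross3 u s))"
    using area by (rule mult_left_mono) simp
  also have "\<dots> = Cs * (\<bar>w \<bullet> s\<bar> * norm u)"
    by (simp add: norm_mult_norm_cross3_orthogonal[OF w_u w_cross, symmetric])
  also have "\<dots> \<le> Cs * (norm (v - m) * d * d)"
    using w_s d(2) \<open>0 < Cs\<close> by (intro mult_left_mono mult_mono) auto
  also have "\<dots> = (Cs * norm (v - m)) * d\<^sup>2"
    by (simp add: power2_eq_square)
  finally have "2 * norm w \<le> Cs * norm (v - m)"
    using d(1) by simp
  then show ?thesis
    using norm_diff_unit_le_tangential[OF v(1) N(2,3)] unfolding w_def by linarith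
qed

lemma is_tri_rep_distinct:
  "is_tri_rep K x y z \<Longrightarrow> x \<noteq> y \<and> y \<noteq> z \<and> x \<noteq> z"
  unfolding is_tri_rep_def by (auto simp: collinear_2 insert_commute)

lemma is_tri_rep_rotate: "is_tri_rep K x y z \<Longrightarrow> is_tri_rep K y z x"
  unfolding is_tri_rep_def by (simp add: insert_commute)

lemma is_tri_rep_cross3_nonzero:
  assumes "is_tri_rep K x y z"
  shows "cross3 (y - x) (z - x) \<noteq> 0"
proof -
  have "\<not> collinear {y, x, z}"
    using assms unfolding is_tri_rep_def by (simp add: insert_commute)
  then have "\<not> collinear {0, y - x, z - x}"
    by (subst (asm) collinear_3) auto
  then show ?thesis
    by (simp add: cross_eq_0)
qed

lemma is_tri_rep_extreme_points:
  assumes "is_tri_rep K x y z"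
  shows "{v. v extreme_point_of K} = {x, y, z}"
proof -
  have "\<not> affine_dependent {x, y, z}"
    using assms affine_dependent_imp_collinear_3 unfolding is_tri_rep_def by blast
  then show ?thesis
    using assms extreme_point_of_convex_hull_affine_independent
    unfolding is_tri_rep_def by blast
qed

lemma is_tri_rep_transfer:
  assumes "is_tri_rep K a b c" "is_tri_rep K x y z" "P a b c"
    and "\<And>x y z. P x y z \<Longrightarrow> P y x z" "\<And>x y z. P x y z \<Longrightarrow> P x z y"
  shows "P x y z"
proof (rule permute_triple[of P a b c])
  show "{x, y, z} = {a, b, c}"
    using is_tri_rep_extreme_points[OF assms(1)] is_tri_rep_extreme_points[OF assms(2)] by simp
  show "x \<noteq> y" "y \<noteq> z" "x \<noteq> z"
    using is_tri_rep_distinct[OF assms(2)] by simp_all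
qed (use assms in blast)+

lemma is_tri_rep_cross3_sign:
  assumes "is_tri_rep K a b c" "is_tri_rep K x y z"
  shows "cross3 (y - x) (z - x) = cross3 (b - a) (c - a)
       \<or> cross3 (y - x) (z - x) = - cross3 (b - a) (c - a)"
  by (rule is_tri_rep_transfer[OF assms, where P = "\<lambda>p q r.
        cross3 (q - p) (r - p) = cross3 (b - a) (c - a)
      \<or> cross3 (q - p) (r - p) = - cross3 (b - a) (c - a)"])
    (metis cross3_diff_swap minus_minus)+

lemma tri_area_eq:
  assumes "is_tri_rep K x y z"
  shows "tri_area K = norm (cross3 (y - x) (z - x)) / 2"
  unfolding tri_area_def
proof (rule the_equality)
  fix t
  assume "\<exists>a b c. is_tri_rep K a b c \<and> t = norm (cross3 (b - a) (c - a)) / 2"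
  then obtain a b c where "is_tri_rep K a b c" "t = norm (cross3 (b - a) (c - a)) / 2"
    by blast
  then show "t = norm (cross3 (y - x) (z - x)) / 2"
    using is_tri_rep_cross3_sign[of K a b c x y z] assms by auto
qed (use assms in blast)

lemma is_tri_rep_vertex_dist_le_diameter:
  assumes "is_tri_rep K x y z" "a \<in> {x, y, z}" "b \<in> {x, y, z}"
  shows "norm (b - a) \<le> diameter K"
proof -
  have K: "K = convex hull {x, y, z}"
    using assms(1) by (simp add: is_tri_rep_def)
  have "bounded K"
    unfolding K by (simp add: finite_imp_bounded_convex_hull)
  moreover have "{x, y, z} \<subseteq> K"
    unfolding K by (rule hull_subset)
  then have "a \<in> K" "b \<in> K"
    using assms(2,3) by blast+
  ultimately show ?thesis
    using diameter_bounded_bound[of K b a] by (simp add: dist_norm)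
qed

lemma normal_choice_parallel_cross3:
  assumes "normal_choice T nb" "K \<in> T" "is_tri_rep K x y z"
  obtains k where "nb K = k *\<^sub>R cross3 (y - x) (z - x)" "norm (nb K) = 1"
proof -
  obtain a b c where abc: "is_tri_rep K a b c"
    and nb: "nb K = (1 / norm (cross3 (b - a) (c - a))) *\<^sub>R cross3 (b - a) (c - a)
      \<or> nb K = - ((1 / norm (cross3 (b - a) (c - a))) *\<^sub>R cross3 (b - a) (c - a))"
    using assms(1,2) unfolding normal_choice_def by blast
  define C where "C = cross3 (b - a) (c - a)"
  have "norm (nb K) = 1"
    using nb is_tri_rep_cross3_nonzero[OF abc] by auto
  moreover obtain \<sigma> where "C = \<sigma> *\<^sub>R cross3 (y - x) (z - x)"
    using is_tri_rep_cross3_sign[OF assms(3) abc] unfolding C_def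
    by (metis scaleR_one scaleR_minus1_left)
  then have "nb K = (\<sigma> / norm C) *\<^sub>R cross3 (y - x) (z - x)
      \<or> nb K = (- \<sigma> / norm C) *\<^sub>R cross3 (y - x) (z - x)"
    using nb unfolding C_def[symmetric] by auto
  ultimately show ?thesis
    using that by blast
qed

definition midpoint_grad :: "(pt set \<Rightarrow> pt) \<Rightarrow> pt \<Rightarrow> pt \<Rightarrow> pt \<Rightarrow> real^3^3 \<Rightarrow> bool" where
  "midpoint_grad n x y z D \<longleftrightarrow>
    (\<exists>c. c + D *v midpoint x y = n (convex hull {x, y}) \<and>
         c + D *v midpoint y z = n (convex hull {y, z}) \<and>
         c + D *v midpoint x z = n (convex hull {x, z})) \<and>
    (\<forall>w. w \<bullet> (y - x) = 0 \<and> w \<bullet> (z - x) = 0 \<longrightarrow> D *v w = 0)"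

lemma tri_grad_eq_The:
  "tri_grad n K = (THE D. \<exists>x y z. is_tri_rep K x y z \<and> midpoint_grad n x y z D)"
  unfolding tri_grad_def midpoint_grad_def by simp

lemma midpoint_grad_swap:
  shows "midpoint_grad n x y z D \<Longrightarrow> midpoint_grad n y x z D"
    and "midpoint_grad n x y z D \<Longrightarrow> midpoint_grad n x z y D"
  unfolding midpoint_grad_def
  by (auto simp: midpoint_sym insert_commute inner_diff_right)

lemma midpoint_grad_edge_vectors:
  assumes "midpoint_grad n x y z D"
  shows "D *v (y - x) = 2 *\<^sub>R (n (convex hull {y, z}) - n (convex hull {x, z}))"
    and "D *v (z - x) = 2 *\<^sub>R (n (convex hull {y, z}) - n (convex hull {x, y}))"
proof -
  obtain c where
    xy: "c + D *v midpoint x y = n (convex hull {x, y})" and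
    yz: "c + D *v midpoint y z = n (convex hull {y, z})" and
    xz: "c + D *v midpoint x z = n (convex hull {x, z})"
    using assms unfolding midpoint_grad_def by blast
  have diff: "D *v (a - b) = m - m'" if "c + D *v a = m" "c + D *v b = m'" for a b m m'
    using that by (metis add_diff_cancel_left matrix_vector_mult_diff_distrib)
  have "y - x = 2 *\<^sub>R (midpoint y z - midpoint x z)"
    "z - x = 2 *\<^sub>R (midpoint y z - midpoint x y)"
    by (simp_all add: midpoint_def algebra_simps)
  then show "D *v (y - x) = 2 *\<^sub>R (n (convex hull {y, z}) - n (convex hull {x, z}))"
    "D *v (z - x) = 2 *\<^sub>R (n (convex hull {y, z}) - n (convex hull {x, y}))"
    using diff[OF yz xz] diff[OF yz xy] by (simp_all add: matrix_vector_mult_scaleR)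
qed

lemma midpoint_grad_unique:
  assumes "midpoint_grad n x y z D1" "midpoint_grad n x y z D2"
  shows "D1 = D2"
proof -
  have "D1 - D2 = 0"
  proof (rule matrix_eq_0_on_span_and_orthogonal[of "{y - x, z - x}"])
    show "(D1 - D2) *v b = 0" if "b \<in> {y - x, z - x}" for b
      using that midpoint_grad_edge_vectors[OF assms(1)] midpoint_grad_edge_vectors[OF assms(2)]
      by (auto simp: matrix_vector_mult_diff_rdistrib)
    show "(D1 - D2) *v w = 0" if "\<And>b. b \<in> {y - x, z - x} \<Longrightarrow> orthogonal w b" for w
      using that assms unfolding midpoint_grad_def orthogonal_def
      by (simp add: matrix_vector_mult_diff_rdistrib)
  qed
  then show ?thesis
    by simp
qed

lemma midpoint_grad_exists:
  assumes "is_tri_rep K x y z"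
  obtains D where "midpoint_grad n x y z D"
proof -
  define u v where "u = y - x" and "v = z - x"
  have "(u \<bullet> u) * (v \<bullet> v) - (u \<bullet> v)\<^sup>2 \<noteq> 0"
    using is_tri_rep_cross3_nonzero[OF assms] by (simp add: gram_det_eq_norm_cross3 u_def v_def)
  then obtain p q where pq: "p \<bullet> u = 1" "p \<bullet> v = 0" "q \<bullet> u = 0" "q \<bullet> v = 1"
    and pq_orth: "\<And>w. w \<bullet> u = 0 \<Longrightarrow> w \<bullet> v = 0 \<Longrightarrow> p \<bullet> w = 0 \<and> q \<bullet> w = 0"
    by (rule dual_basis_pair) blast
  define nxy nyz nxz
    where "nxy = n (convex hull {x, y})" and "nyz = n (convex hull {y, z})"
      and "nxz = n (convex hull {x, z})"
  \<comment> \<open>the values on the edge vectors are forced by \<open>midpoint_grad_edge_vectors\<close>\<close>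
  define f where "f w = (p \<bullet> w) *\<^sub>R (2 *\<^sub>R (nyz - nxz)) + (q \<bullet> w) *\<^sub>R (2 *\<^sub>R (nyz - nxy))" for w
  have lin: "linear f"
    unfolding linear_iff f_def by (simp add: inner_add_right algebra_simps)
  define D where "D = matrix f"
  have D: "D *v w = f w" for w
    by (simp add: D_def matrix_vector_mul(2)[OF lin])
  define c where "c = nxy - f (midpoint x y)"
  have "midpoint y z = midpoint x y + (1/2) *\<^sub>R v"
    "midpoint x z = midpoint x y + (1/2) *\<^sub>R v - (1/2) *\<^sub>R u"
    by (simp_all add: u_def v_def midpoint_def algebra_simps)
  then have "c + D *v midpoint x y = nxy" "c + D *v midpoint y z = nyz"
    "c + D *v midpoint x z = nxz"
    by (simp_all add: c_def D linear_add[OF lin] linear_diff[OF lin] linear_cmul[OF lin])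
      (simp_all add: f_def pq algebra_simps)
  moreover have "D *v w = 0" if "w \<bullet> (y - x) = 0" "w \<bullet> (z - x) = 0" for w
    using pq_orth[of w] that by (simp add: D f_def u_def v_def)
  ultimately have "midpoint_grad n x y z D"
    unfolding midpoint_grad_def nxy_def nyz_def nxz_def by blast
  then show ?thesis
    by (rule that)
qed

lemma tri_grad_midpoint_grad:
  assumes xyz: "is_tri_rep K x y z"
  shows "midpoint_grad n x y z (tri_grad n K)"
proof -
  have transfer: "midpoint_grad n x y z D"
    if "is_tri_rep K a b c" "midpoint_grad n a b c D" for a b c D
    using is_tri_rep_transfer[OF that(1) xyz, of "\<lambda>x y z. midpoint_grad n x y z D"]
      that(2) midpoint_grad_swap by blast
  obtain D where D: "midpoint_grad n x y z D"
    using midpoint_grad_exists[OF xyz] .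
  have "\<exists>!D. \<exists>a b c. is_tri_rep K a b c \<and> midpoint_grad n a b c D"
  proof (rule ex1I)
    show "\<exists>a b c. is_tri_rep K a b c \<and> midpoint_grad n a b c D"
      using xyz D by blast
    show "D' = D" if "\<exists>a b c. is_tri_rep K a b c \<and> midpoint_grad n a b c D'" for D'
      using that transfer midpoint_grad_unique[OF _ D] by blast
  qed
  then have "\<exists>a b c. is_tri_rep K a b c \<and> midpoint_grad n a b c (tri_grad n K)"
    unfolding tri_grad_eq_The by (rule theI')
  then show ?thesis
    using transfer by blast
qed

lemma director_diff_le_grad:
  assumes "is_tri_rep K x y z"
  shows "norm (n (convex hull {x, y}) - n (convex hull {y, z}))
    \<le> norm (tri_grad n K) * diameter K / 2"
proof -
  have "2 * norm (n (convex hull {x, y}) - n (convex hull {y, z})) = norm (tri_grad n K *v (z - x))"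
    using midpoint_grad_edge_vectors(2)[OF tri_grad_midpoint_grad[OF assms]]
    by (simp add: norm_minus_commute)
  also have "\<dots> \<le> norm (tri_grad n K) * norm (z - x)"
    by (rule norm_matrix_vector_mult_le)
  also have "\<dots> \<le> norm (tri_grad n K) * diameter K"
    using is_tri_rep_vertex_dist_le_diameter[OF assms, of x z] by (simp add: mult_left_mono)
  finally show ?thesis
    by simp
qed

lemma unit_edge_director_orthogonal:
  assumes "unit_edge_director T nb n" "convex hull {a, b} \<in> complex_edges T" "a \<noteq> b"
  shows "n (convex hull {a, b}) \<bullet> (b - a) = 0"
  using assms unfolding unit_edge_director_def by auto

lemma edge_director_normal_bound:
  assumes "regular_complex Cs T" "normal_choice T nb" "unit_edge_director T nb n"
    and "K \<in> T" "e \<in> tri_edges K" "0 < Cs"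
  shows "norm (n e - nb K) \<le> Cs / 2 * diameter K * norm (tri_grad n K)"
proof -
  obtain x y z where xyz: "is_tri_rep K x y z" and e: "e = convex hull {x, y}"
    using assms(5) unfolding tri_edges_def by blast
  have "convex hull {y, z} \<in> tri_edges K"
    using is_tri_rep_rotate[OF xyz] unfolding tri_edges_def by blast
  then have edges: "e \<in> complex_edges T" "convex hull {y, z} \<in> complex_edges T"
    using assms(4,5) unfolding complex_edges_def by blast+
  have distinct: "x \<noteq> y" "y \<noteq> z"
    using is_tri_rep_distinct[OF xyz] by simp_all
  have cross: "cross3 (y - x) (z - x) = cross3 (y - x) (z - y)"
    by (simp add: cross3_simps)
  then obtain k where nb: "nb K = k *\<^sub>R cross3 (y - x) (z - y)" "norm (nb K) = 1"
    using normal_choice_parallel_cross3[OF assms(2,4) xyz] by metis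
  define d where "d = diameter K"
  have u_d: "norm (y - x) \<le> d" and s_d: "norm (z - y) \<le> d"
    using is_tri_rep_vertex_dist_le_diameter[OF xyz] by (simp_all add: d_def)
  moreover have "0 < norm (y - x)"
    using distinct(1) by simp
  ultimately have "0 < d"
    by linarith
  have "d\<^sup>2 / Cs \<le> tri_area K"
    using assms(1,4) unfolding regular_complex_def d_def by blast
  also have "\<dots> = norm (cross3 (y - x) (z - y)) / 2"
    using tri_area_eq[OF xyz] cross by simp
  finally have area: "2 * d\<^sup>2 \<le> Cs * norm (cross3 (y - x) (z - y))"
    using assms(6) by (simp add: field_simps)
  have unit: "norm (n e) = 1" and sign: "n e \<bullet> nb K \<ge> 0"
    using assms(3,4,5) edges(1) unfolding unit_edge_director_def by auto
  have orth: "n e \<bullet> (y - x) = 0" "n (convex hull {y, z}) \<bullet> (z - y) = 0"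
    using unit_edge_director_orthogonal[OF assms(3)] edges distinct e by simp_all
  have "norm (n e - nb K) \<le> Cs * norm (n e - n (convex hull {y, z}))"
    by (rule unit_normal_deviation_le[OF unit orth nb sign \<open>0 < d\<close> u_d s_d area])
  also have "\<dots> \<le> Cs * (norm (tri_grad n K) * d / 2)"
    using director_diff_le_grad[OF xyz] assms(6) e d_def by (simp add: mult_left_mono)
  finally show ?thesis
    by (simp add: d_def mult_ac)
qed

lemma complex_edges_segment:
  assumes "e \<in> complex_edges T"
  obtains p q where "p \<noteq> q" "e = convex hull {p, q}"
  using assms is_tri_rep_distinct unfolding complex_edges_def tri_edges_def by blast

lemma shared_edge_in_tri_edges:
  assumes "tri_complex T" "K \<in> T" "K' \<in> T" "K \<noteq> K'" "e = K \<inter> K'" "e \<in> complex_edges T"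
  shows "e \<in> tri_edges K"
proof -
  obtain p q where "p \<noteq> q" "e = convex hull {p, q}"
    using complex_edges_segment[OF assms(6)] .
  then have "{p, q} \<subseteq> K \<inter> K'"
    using assms(5) hull_subset by metis
  then have "p \<in> K \<inter> K'" "q \<in> K \<inter> K'"
    by simp_all
  then have "K \<inter> K' \<noteq> {}" "\<And>v. K \<inter> K' \<noteq> {v}"
    using \<open>p \<noteq> q\<close> by (blast, metis singletonD)
  moreover have "K \<inter> K' = {}
      \<or> (\<exists>v. v \<in> tri_vertices K \<and> v \<in> tri_vertices K' \<and> K \<inter> K' = {v})
      \<or> (\<exists>e'. e' \<in> tri_edges K \<and> e' \<in> tri_edges K' \<and> K \<inter> K' = e')"
    using assms(1-4) unfolding tri_complex_def by blast
  ultimately show ?thesis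
    using assms(5) by metis
qed

theorem lemma3p1:
  fixes Cs :: real
  assumes "Cs > 1"
  shows "\<exists>C>0. \<forall>(T :: (real^3) set set) nb n.
           tri_complex T \<and> regular_complex Cs T \<and> normal_choice T nb \<and>
           unit_edge_director T nb n \<longrightarrow>
           (\<forall>K\<in>T. \<forall>K'\<in>T. \<forall>e. K \<noteq> K' \<and> e = K \<inter> K' \<and> e \<in> complex_edges T \<longrightarrow>
              norm (n e - nb K) \<le> C * diameter K * norm (tri_grad n K))"
proof (intro exI[of _ "Cs / 2"] conjI allI impI ballI)
  show "0 < Cs / 2"
    using assms by simp
  fix T :: "(real^3) set set" and nb n K K' e
  assume T: "tri_complex T \<and> regular_complex Cs T \<and> normal_choice T nb \<and> unit_edge_director T nb n"
    and K: "K \<in> T" "K' \<in> T" and e: "K \<noteq> K' \<and> e = K \<inter> K' \<and> e \<in> complex_edges T"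
  then have edge: "e \<in> tri_edges K"
    using shared_edge_in_tri_edges by blast
  show "norm (n e - nb K) \<le> Cs / 2 * diameter K * norm (tri_grad n K)"
    by (rule edge_director_normal_bound[OF _ _ _ K(1) edge]) (use T assms in simp_all)
qed

end
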